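(* Let $a,b,c,k,m>0$. The system $$\frac{dx}{dt}=bx(1-x-cy),\qquad \frac{dy}{dt}=y\Big(\frac{1}{1+kx}-y-ax-mxy\Big)$$ has no limit cycle (indeed no closed trajectory) lying in the open positive quadrant $\{(x,y):x>0,y>0\}$.
   Context: All parameters are positive constants. *)

theory Defs
  imports Complex_Main
begin

definition fx :: "real \<Rightarrow> real \<Rightarrow> real \<Rightarrow> real \<Rightarrow> real" where
  "fx b c x y = b * x * (1 - x - c * y)"

definition fy :: "real \<Rightarrow> real \<Rightarrow> real \<Rightarrow> real \<Rightarrow> real \<Rightarrow> real" where
  "fy a k m x y = y * (1 / (1 + k * x) - y - a * x - m * x * y)"

definition closed_trajectory ::
  "real \<Rightarrow> real \<Rightarrow> real \<Rightarrow> real \<Rightarrow> real \<Rightarrow> (real \<Rightarrow> real) \<Rightarrow> (real \<Rightarrow> real) \<Rightarrow> bool" where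
  "closed_trajectory a b c k m x y \<longleftrightarrow>
     (\<forall>t. (x has_real_derivative fx b c (x t) (y t)) (at t) \<and>
          (y has_real_derivative fy a k m (x t) (y t)) (at t)) \<and>
     (\<exists>T>0. \<forall>t. x (t + T) = x t \<and> y (t + T) = y t) \<and>
     (\<exists>s t. (x s, y s) \<noteq> (x t, y t))"

end

theory Submission
  imports Defs
begin

text \<open>The system is competitive: the growth rate of each species decreases with the density of the
  other. Differentiating along a solution, the velocity (u, v) = (x', y') obeys a linear system
  u' = al u - be v, v' = de v - ga u with be, ga \<ge> 0, for which the quadrants
  {u \<ge> 0 \<ge> v} and {u \<le> 0 \<le> v} are forward invariant. On a periodic orbit u vanishes
  somewhere by Rolle's theorem, so from that moment on (u, v) stays in one of these quadrants for a
  whole period; then x and y are monotone over a period, hence constant.\<close>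

lemma has_real_derivative_min_zero_square:
  "((\<lambda>z::real. (min z 0)\<^sup>2) has_real_derivative 2 * min z 0) (at z)"
proof -
  consider "z < 0" | "z > 0" | "z = 0" by linarith
  then show ?thesis
  proof cases
    case 1
    have "((\<lambda>z::real. z\<^sup>2) has_real_derivative 2 * min z 0) (at z)"
      using 1 by (auto intro!: derivative_eq_intros)
    then show ?thesis
      by (rule has_field_derivative_transform_within_open[where S = "{..<0}"]) (use 1 in auto)
  next
    case 2
    have "((\<lambda>z::real. 0) has_real_derivative 2 * min z 0) (at z)"
      using 2 by (auto intro!: derivative_eq_intros)
    then show ?thesis
      by (rule has_field_derivative_transform_within_open[where S = "{0<..}"]) (use 2 in auto)
  next
    case 3
    have "((\<lambda>w::real. (min w 0)\<^sup>2 / w) \<longlongrightarrow> 0) (at 0)"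
    proof (rule tendsto_sandwich[where f = "\<lambda>w. - \<bar>w\<bar>" and h = "\<lambda>w. \<bar>w\<bar>"])
      show "\<forall>\<^sub>F w in at 0. - \<bar>w\<bar> \<le> (min w 0)\<^sup>2 / (w::real)"
        and "\<forall>\<^sub>F w in at 0. (min w 0)\<^sup>2 / (w::real) \<le> \<bar>w\<bar>"
        by (auto simp: min_def power2_eq_square)
    qed (auto intro!: tendsto_eq_intros)
    then show ?thesis
      using 3 by (simp add: DERIV_def)
  qed
qed

lemma gronwall_vanishing:
  fixes E E' :: "real \<Rightarrow> real"
  assumes deriv: "\<And>s. a \<le> s \<Longrightarrow> s \<le> t \<Longrightarrow> (E has_real_derivative E' s) (at s)"
    and growth: "\<And>s. a \<le> s \<Longrightarrow> s \<le> t \<Longrightarrow> E' s \<le> K * E s"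
    and nonneg: "0 \<le> E t"
    and start: "E a = 0" and "a \<le> t"
  shows "E t = 0"
proof -
  define F where "F s = E s * exp (- K * s)" for s
  have "F t \<le> F a"
  proof (rule DERIV_nonpos_imp_nonincreasing[OF \<open>a \<le> t\<close>])
    fix s assume s: "a \<le> s" "s \<le> t"
    have "(F has_real_derivative (E' s - K * E s) * exp (- K * s)) (at s)"
      unfolding F_def
      by (rule derivative_eq_intros deriv[OF s] refl)+ (simp add: algebra_simps)
    moreover have "(E' s - K * E s) * exp (- K * s) \<le> 0"
      using growth[OF s] by (simp add: mult_nonpos_nonneg)
    ultimately show "\<exists>y. DERIV F s :> y \<and> y \<le> 0" by blast
  qed
  then have "E t \<le> 0"
    using start by (simp add: F_def mult_le_0_iff)
  with nonneg show ?thesis by simp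
qed

lemma neg_part_times_cooperative_le:
  fixes p q al be K :: real
  assumes "\<bar>al\<bar> \<le> K" "0 \<le> be" "be \<le> K"
  shows "2 * min p 0 * (al * p + be * q) \<le> 3 * K * ((min p 0)\<^sup>2 + (min q 0)\<^sup>2)"
proof -
  define P Q where "P = min p 0" and "Q = min q 0"
  have "2 * P * (al * p + be * q) = 2 * al * P\<^sup>2 + 2 * be * (P * q)"
    by (simp add: P_def min_def power2_eq_square algebra_simps)
  also have "\<dots> \<le> 2 * K * P\<^sup>2 + 2 * be * (P * Q)"
  proof (rule add_mono)
    show "2 * al * P\<^sup>2 \<le> 2 * K * P\<^sup>2"
      using assms(1) by (intro mult_right_mono) auto
    show "2 * be * (P * q) \<le> 2 * be * (P * Q)"
    proof -
      have "P * q \<le> P * Q"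
        by (cases "q \<le> 0") (auto simp: P_def Q_def mult_nonpos_nonneg)
      then show ?thesis
        using assms(2) by (simp add: mult_left_mono)
    qed
  qed
  also have "\<dots> \<le> 2 * K * P\<^sup>2 + K * (P\<^sup>2 + Q\<^sup>2)"
  proof -
    have "2 * (P * Q) \<le> P\<^sup>2 + Q\<^sup>2"
      using sum_squares_bound[of P Q] by (simp add: power2_eq_square)
    then have "be * (2 * (P * Q)) \<le> K * (P\<^sup>2 + Q\<^sup>2)"
      using assms(2,3) by (meson mult_left_mono mult_right_mono sum_power2_ge_zero order_trans)
    then show ?thesis by simp
  qed
  also have "\<dots> \<le> 3 * K * (P\<^sup>2 + Q\<^sup>2)"
    using assms(1) by (simp add: algebra_simps)
  finally show ?thesis by (simp add: P_def Q_def)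
qed

lemma cooperative_linear_system_preserves_nonneg:
  fixes p q al be ga de :: "real \<Rightarrow> real"
  assumes dp: "\<And>s. s \<in> {lo..hi} \<Longrightarrow> (p has_real_derivative al s * p s + be s * q s) (at s)"
    and dq: "\<And>s. s \<in> {lo..hi} \<Longrightarrow> (q has_real_derivative de s * q s + ga s * p s) (at s)"
    and cont: "continuous_on {lo..hi} al" "continuous_on {lo..hi} be"
      "continuous_on {lo..hi} ga" "continuous_on {lo..hi} de"
    and coop: "\<And>s. s \<in> {lo..hi} \<Longrightarrow> 0 \<le> be s \<and> 0 \<le> ga s"
    and start: "0 \<le> p lo" "0 \<le> q lo"
    and t: "t \<in> {lo..hi}"
  shows "0 \<le> p t \<and> 0 \<le> q t"
proof -
  define S where "S s = \<bar>al s\<bar> + \<bar>be s\<bar> + \<bar>ga s\<bar> + \<bar>de s\<bar>" for s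
  have "continuous_on {lo..hi} S"
    unfolding S_def using cont by (intro continuous_intros)
  then obtain K where K: "\<And>s. s \<in> {lo..hi} \<Longrightarrow> S s \<le> K"
    using continuous_attains_sup[of "{lo..hi}" S] t by fastforce
  define E where "E s = (min (p s) 0)\<^sup>2 + (min (q s) 0)\<^sup>2" for s
  define E' where "E' s = 2 * min (p s) 0 * (al s * p s + be s * q s)
      + 2 * min (q s) 0 * (de s * q s + ga s * p s)" for s
  \<comment> \<open>E is the squared distance to the nonnegative quadrant; cooperativity gives E' \<le> 6 K E.\<close>
  have "E t = 0"
  proof (rule gronwall_vanishing[where a = lo and E = E and E' = E' and K = "6 * K"])
    fix s assume "lo \<le> s" "s \<le> t"
    with t have s: "s \<in> {lo..hi}" by simp
    show "(E has_real_derivative E' s) (at s)"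
      unfolding E_def E'_def
      by (intro DERIV_add DERIV_chain2[OF has_real_derivative_min_zero_square] dp dq s)
    have "\<bar>al s\<bar> \<le> K" "\<bar>de s\<bar> \<le> K" "0 \<le> be s" "be s \<le> K" "0 \<le> ga s" "ga s \<le> K"
      using K[OF s] coop[OF s] by (auto simp: S_def)
    then have "2 * min (p s) 0 * (al s * p s + be s * q s) \<le> 3 * K * E s"
      and "2 * min (q s) 0 * (de s * q s + ga s * p s) \<le> 3 * K * E s"
      unfolding E_def using neg_part_times_cooperative_le[of "de s" K "ga s" "q s" "p s"]
      by (simp_all add: neg_part_times_cooperative_le add.commute[of "(min (q s) 0)\<^sup>2"])
    then show "E' s \<le> 6 * K * E s"
      unfolding E'_def by simp
  qed (use t start in \<open>auto simp: E_def\<close>)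
  then show ?thesis
    unfolding E_def by (auto simp: add_nonneg_eq_0_iff min_def split: if_splits)
qed

lemma periodic_add_of_int:
  assumes "\<And>t. f (t + T) = f t"
  shows "f (t + of_int n * T) = f t"
proof (induction n rule: int_induct[where k = 0])
  case (step1 i)
  then show ?case
    using assms[of "t + of_int i * T"] by (simp add: algebra_simps)
next
  case (step2 i)
  then show ?case
    using assms[of "t + of_int (i - 1) * T"] by (simp add: algebra_simps)
qed simp

lemma periodic_monotone_imp_constant:
  fixes f f' :: "real \<Rightarrow> real"
  assumes periodic: "\<And>t. f (t + T) = f t" and "0 < T"
    and deriv: "\<And>t. t \<in> {a..a + T} \<Longrightarrow> (f has_real_derivative f' t) (at t)"
    and sign: "(\<forall>t\<in>{a..a + T}. 0 \<le> f' t) \<or> (\<forall>t\<in>{a..a + T}. f' t \<le> 0)"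
  shows "f s = f a"
proof -
  have on_period: "g r = g a"
    if g_periodic: "\<And>t. g (t + T) = g t"
      and g_deriv: "\<And>t. t \<in> {a..a + T} \<Longrightarrow> (g has_real_derivative g' t) (at t)"
      and g'_nonneg: "\<And>t. t \<in> {a..a + T} \<Longrightarrow> 0 \<le> g' t"
      and r: "r \<in> {a..a + T}"
    for g g' :: "real \<Rightarrow> real" and r
  proof -
    have "\<exists>y. DERIV g t :> y \<and> 0 \<le> y" if "t \<in> {a..a + T}" for t
      using g_deriv g'_nonneg that by blast
    then have "g a \<le> g r" "g r \<le> g (a + T)"
      using r by (simp_all add: DERIV_nonneg_imp_nondecreasing)
    then show ?thesis
      using g_periodic[of a] by simp
  qed
  define n where "n = \<lfloor>(s - a) / T\<rfloor>"
  define r where "r = s - of_int n * T"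
  have "of_int n \<le> (s - a) / T" "(s - a) / T < of_int n + 1"
    unfolding n_def by linarith+
  then have r: "r \<in> {a..a + T}"
    using \<open>0 < T\<close> by (simp add: r_def field_simps)
  have "f s = f r"
    using periodic_add_of_int[of f T r n, OF periodic] by (simp add: r_def)
  also have "\<dots> = f a"
    using sign
  proof
    assume "\<forall>t\<in>{a..a + T}. 0 \<le> f' t"
    then show ?thesis
      using on_period[of f f' r] periodic deriv r by blast
  next
    assume "\<forall>t\<in>{a..a + T}. f' t \<le> 0"
    then have "- f r = - f a"
      using on_period[of "\<lambda>t. - f t" "\<lambda>t. - f' t" r] periodic deriv r
      by (auto intro: DERIV_minus)
    then show ?thesis by simp
  qed
  finally show ?thesis .
qed

lemma competitive_periodic_solution_constant:
  fixes x y u v al be ga de :: "real \<Rightarrow> real"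
  assumes dx: "\<And>t. (x has_real_derivative u t) (at t)"
    and dy: "\<And>t. (y has_real_derivative v t) (at t)"
    and du: "\<And>t. (u has_real_derivative al t * u t - be t * v t) (at t)"
    and dv: "\<And>t. (v has_real_derivative de t * v t - ga t * u t) (at t)"
    and cont: "continuous_on UNIV al" "continuous_on UNIV be"
      "continuous_on UNIV ga" "continuous_on UNIV de"
    and competitive: "\<And>t. 0 \<le> be t" "\<And>t. 0 \<le> ga t"
    and "0 < T" and periodic: "\<And>t. x (t + T) = x t" "\<And>t. y (t + T) = y t"
  shows "x s = x t \<and> y s = y t"
proof -
  obtain \<xi> where "u \<xi> = 0"
  proof -
    have "continuous_on {0..T} x"
      using dx by (meson DERIV_isCont continuous_at_imp_continuous_on)
    moreover have "x 0 = x T"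
      using periodic(1)[of 0] by simp
    ultimately obtain z where "DERIV x z :> 0"
      using Rolle[OF \<open>0 < T\<close>] dx real_differentiable_def by blast
    then show ?thesis
      using DERIV_unique[OF dx] that by blast
  qed
  let ?I = "{\<xi>..\<xi> + T}"
  have cont_I: "continuous_on ?I al" "continuous_on ?I be"
    "continuous_on ?I ga" "continuous_on ?I de"
    using cont by (auto intro: continuous_on_subset)
  \<comment> \<open>Both (u, -v) and (-u, v) solve a cooperative linear system.\<close>
  have sign: "(\<forall>t\<in>?I. 0 \<le> u t \<and> v t \<le> 0) \<or> (\<forall>t\<in>?I. u t \<le> 0 \<and> 0 \<le> v t)"
  proof (cases "v \<xi> \<le> 0")
    case True
    have "0 \<le> u t \<and> 0 \<le> - v t" if "t \<in> ?I" for t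
    proof (rule cooperative_linear_system_preserves_nonneg[where p = u and q = "\<lambda>t. - v t"
          and lo = \<xi> and hi = "\<xi> + T" and al = al and be = be and ga = ga and de = de])
      fix s assume "s \<in> ?I"
      show "(u has_real_derivative al s * u s + be s * - v s) (at s)"
        using du[of s] by simp
      show "((\<lambda>t. - v t) has_real_derivative de s * - v s + ga s * u s) (at s)"
        using DERIV_minus[OF dv[of s]] by (simp add: algebra_simps)
    qed (use cont_I competitive True \<open>u \<xi> = 0\<close> that in auto)
    then show ?thesis by auto
  next
    case False
    have "0 \<le> - u t \<and> 0 \<le> v t" if "t \<in> ?I" for t
    proof (rule cooperative_linear_system_preserves_nonneg[where p = "\<lambda>t. - u t" and q = v
          and lo = \<xi> and hi = "\<xi> + T" and al = al and be = be and ga = ga and de = de])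
      fix s assume "s \<in> ?I"
      show "((\<lambda>t. - u t) has_real_derivative al s * - u s + be s * v s) (at s)"
        using DERIV_minus[OF du[of s]] by (simp add: algebra_simps)
      show "(v has_real_derivative de s * v s + ga s * - u s) (at s)"
        using dv[of s] by (simp add: algebra_simps)
    qed (use cont_I competitive False \<open>u \<xi> = 0\<close> that in auto)
    then show ?thesis by auto
  qed
  have "x r = x \<xi>" for r
    using sign by (intro periodic_monotone_imp_constant[OF periodic(1) \<open>0 < T\<close> dx]) auto
  moreover have "y r = y \<xi>" for r
    using sign by (intro periodic_monotone_imp_constant[OF periodic(2) \<open>0 < T\<close> dy]) auto
  ultimately show ?thesis
    by metis
qed

lemma fx_along_has_derivative:
  assumes "(x has_real_derivative x') (at t)" and "(y has_real_derivative y') (at t)"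
  shows "((\<lambda>t. fx b c (x t) (y t)) has_real_derivative
    (b - 2 * b * x t - b * c * y t) * x' - b * c * x t * y') (at t)"
  unfolding fx_def
  by (rule derivative_eq_intros assms refl)+ (simp add: algebra_simps)

lemma fy_along_has_derivative:
  assumes "(x has_real_derivative x') (at t)" and "(y has_real_derivative y') (at t)"
    and "1 + k * x t \<noteq> 0"
  shows "((\<lambda>t. fy a k m (x t) (y t)) has_real_derivative
    (1 / (1 + k * x t) - 2 * y t - a * x t - 2 * m * x t * y t) * y'
    - (k * y t / (1 + k * x t)\<^sup>2 + a * y t + m * (y t)\<^sup>2) * x') (at t)"
  unfolding fy_def
  by (rule derivative_eq_intros assms refl)+
    (use assms(3) in \<open>simp add: field_simps power2_eq_square\<close>)

theorem theorem6:
  fixes a b c k m :: real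
  assumes "a > 0" "b > 0" "c > 0" "k > 0" "m > 0"
  shows "\<not> (\<exists>x y. closed_trajectory a b c k m x y \<and> (\<forall>t. x t > 0 \<and> y t > 0))"
proof
  assume "\<exists>x y. closed_trajectory a b c k m x y \<and> (\<forall>t. x t > 0 \<and> y t > 0)"
  then obtain x y T where pos: "\<And>t. 0 < x t \<and> 0 < y t"
    and dx: "\<And>t. (x has_real_derivative fx b c (x t) (y t)) (at t)"
    and dy: "\<And>t. (y has_real_derivative fy a k m (x t) (y t)) (at t)"
    and "0 < T" and periodic: "\<And>t. x (t + T) = x t" "\<And>t. y (t + T) = y t"
    and nonconstant: "\<exists>s t. (x s, y s) \<noteq> (x t, y t)"
    unfolding closed_trajectory_def by blast
  have cont: "continuous_on UNIV x" "continuous_on UNIV y"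
    using dx dy by (meson DERIV_isCont continuous_at_imp_continuous_on)+
  have denom: "1 + k * x t \<noteq> 0" for t
    using pos[of t] \<open>k > 0\<close> by (smt (verit) mult_pos_pos)
  have "x s = x t \<and> y s = y t" for s t
    using cont denom pos assms
    by (intro competitive_periodic_solution_constant[where
          al = "\<lambda>t. b - 2 * b * x t - b * c * y t" and be = "\<lambda>t. b * c * x t"
          and ga = "\<lambda>t. k * y t / (1 + k * x t)\<^sup>2 + a * y t + m * (y t)\<^sup>2"
          and de = "\<lambda>t. 1 / (1 + k * x t) - 2 * y t - a * x t - 2 * m * x t * y t",
          OF dx dy fx_along_has_derivative[OF dx dy] fy_along_has_derivative[OF dx dy denom]
            _ _ _ _ _ _ \<open>0 < T\<close> periodic])
      (auto intro!: continuous_intros simp: pos less_imp_le)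
  with nonconstant show False
    by auto
qed

end
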